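(* Let $G$ be a group acting geometrically (i.e.\ properly and cocompactly by isometries) on a CAT(0) space $X$, and let $g\in G$ have infinite order. Then $$\mathcal{F}_g=L(Z_g)=\partial\operatorname{Min}(g).$$
   Context: $\partial X$ is the visual boundary of the (necessarily proper) CAT(0) space $X$ (asymptotic classes of geodesic rays, with the cone topology making $X\cup\partial X$ a compactification), and $g$ acts on it by $g(\xi(\infty))=(g\circ\xi)(\infty)$. $\mathcal{F}_g=\{\alpha\in\partial X\mid g\alpha=\alpha\}$. $Z_g=\{v\in G\mid gv=vg\}$ is the centralizer of $g$. For $A\subset G$, $L(A)=\overline{Ax_0}\cap\partial X$ (closure in $X\cup\partial X$, for any $x_0\in X$). $|g|=\inf_{x\in X}d(x,gx)$ and $\operatorname{Min}(g)=\{x\in X\mid d(x,gx)=|g|\}$; $\partial\operatorname{Min}(g)\subset\partial X$ is the set of boundary points represented by geodesic rays contained in the closed convex set $\operatorname{Min}(g)$. *)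

theory Defs
  imports "HOL-Analysis.Analysis" "HOL-Algebra.Group"
begin

section \<open>CAT(0) spaces (the whole type 'a is the space X)\<close>

definition geodesic_seg :: "(real \<Rightarrow> 'a::metric_space) \<Rightarrow> 'a \<Rightarrow> 'a \<Rightarrow> bool" where
  "geodesic_seg \<gamma> x y \<longleftrightarrow> \<gamma> 0 = x \<and> \<gamma> (dist x y) = y \<and>
     (\<forall>s\<in>{0..dist x y}. \<forall>t\<in>{0..dist x y}. dist (\<gamma> s) (\<gamma> t) = \<bar>s - t\<bar>)"

text \<open>Pairs (point on a side, its comparison point) for the side \<gamma> of length d,
  whose comparison side in the Euclidean plane (complex numbers) runs from a' to b'.\<close>
definition side_pairs :: "(real \<Rightarrow> 'a::metric_space) \<Rightarrow> real \<Rightarrow> complex \<Rightarrow> complex \<Rightarrow> ('a \<times> complex) set" where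
  "side_pairs \<gamma> d a' b' = {(\<gamma> s, a' + complex_of_real s * sgn (b' - a')) | s. 0 \<le> s \<and> s \<le> d}"

definition CAT0_ineq :: "'a::metric_space itself \<Rightarrow> bool" where
  "CAT0_ineq TYPE('a) \<longleftrightarrow>
    (\<forall>(x::'a) y z \<gamma>1 \<gamma>2 \<gamma>3 (x'::complex) y' z'.
       geodesic_seg \<gamma>1 x y \<and> geodesic_seg \<gamma>2 y z \<and> geodesic_seg \<gamma>3 z x \<and>
       dist x' y' = dist x y \<and> dist y' z' = dist y z \<and> dist z' x' = dist z x \<longrightarrow>
       (let T = side_pairs \<gamma>1 (dist x y) x' y' \<union> side_pairs \<gamma>2 (dist y z) y' z'
                \<union> side_pairs \<gamma>3 (dist z x) z' x'
        in \<forall>(p, p')\<in>T. \<forall>(q, q')\<in>T. dist p q \<le> dist p' q'))"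

definition geodesic_space :: "'a::metric_space itself \<Rightarrow> bool" where
  "geodesic_space TYPE('a) \<longleftrightarrow> (\<forall>x y::'a. \<exists>\<gamma>. geodesic_seg \<gamma> x y)"

definition CAT0 :: "'a::metric_space itself \<Rightarrow> bool" where
  "CAT0 TYPE('a) \<longleftrightarrow> complete (UNIV::'a set) \<and> geodesic_space TYPE('a) \<and> CAT0_ineq TYPE('a)"

definition proper_space :: "'a::metric_space itself \<Rightarrow> bool" where
  "proper_space TYPE('a) \<longleftrightarrow> (\<forall>(x::'a) r. compact (cball x r))"

definition isometric_action :: "('g, 'm) monoid_scheme \<Rightarrow> ('g \<Rightarrow> 'a::metric_space \<Rightarrow> 'a) \<Rightarrow> bool" where
  "isometric_action G \<phi> \<longleftrightarrow>
     (\<forall>g\<in>carrier G. bij (\<phi> g) \<and> (\<forall>x y. dist (\<phi> g x) (\<phi> g y) = dist x y)) \<and>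
     \<phi> \<one>\<^bsub>G\<^esub> = id \<and>
     (\<forall>g\<in>carrier G. \<forall>h\<in>carrier G. \<phi> (g \<otimes>\<^bsub>G\<^esub> h) = \<phi> g \<circ> \<phi> h)"

text \<open>Proper action (Bridson--Haefliger I.8.2).\<close>
definition properly_acting :: "('g, 'm) monoid_scheme \<Rightarrow> ('g \<Rightarrow> 'a::metric_space \<Rightarrow> 'a) \<Rightarrow> bool" where
  "properly_acting G \<phi> \<longleftrightarrow>
     (\<forall>x. \<exists>r>0. finite {g\<in>carrier G. \<phi> g ` ball x r \<inter> ball x r \<noteq> {}})"

definition cocompact_action :: "('g, 'm) monoid_scheme \<Rightarrow> ('g \<Rightarrow> 'a::metric_space \<Rightarrow> 'a) \<Rightarrow> bool" where
  "cocompact_action G \<phi> \<longleftrightarrow> (\<exists>K. compact K \<and> (\<forall>x. \<exists>g\<in>carrier G. x \<in> \<phi> g ` K))"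

definition geometric_action :: "('g, 'm) monoid_scheme \<Rightarrow> ('g \<Rightarrow> 'a::metric_space \<Rightarrow> 'a) \<Rightarrow> bool" where
  "geometric_action G \<phi> \<longleftrightarrow> isometric_action G \<phi> \<and> properly_acting G \<phi> \<and> cocompact_action G \<phi>"

definition geodesic_ray :: "(real \<Rightarrow> 'a::metric_space) \<Rightarrow> bool" where
  "geodesic_ray c \<longleftrightarrow> (\<forall>s\<ge>0. \<forall>t\<ge>0. dist (c s) (c t) = \<bar>s - t\<bar>)"

definition asymptotic :: "(real \<Rightarrow> 'a::metric_space) \<Rightarrow> (real \<Rightarrow> 'a) \<Rightarrow> bool" where
  "asymptotic c c' \<longleftrightarrow> (\<exists>B. \<forall>t\<ge>0. dist (c t) (c' t) \<le> B)"

text \<open>The boundary point c(\<infinity>): the asymptoty class of the ray c.\<close>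
definition ray_class :: "(real \<Rightarrow> 'a::metric_space) \<Rightarrow> (real \<Rightarrow> 'a) set" where
  "ray_class c = {c'. geodesic_ray c' \<and> asymptotic c c'}"

definition visual_boundary :: "'a::metric_space itself \<Rightarrow> (real \<Rightarrow> 'a) set set" where
  "visual_boundary TYPE('a) = {ray_class c | c::real \<Rightarrow> 'a. geodesic_ray c}"

definition bdry_act :: "('a::metric_space \<Rightarrow> 'a) \<Rightarrow> (real \<Rightarrow> 'a) set \<Rightarrow> (real \<Rightarrow> 'a) set" where
  "bdry_act f \<xi> = ray_class (f \<circ> (SOME c. c \<in> \<xi>))"

definition fixed_bdry :: "('g \<Rightarrow> 'a::metric_space \<Rightarrow> 'a) \<Rightarrow> 'g \<Rightarrow> (real \<Rightarrow> 'a) set set" where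
  "fixed_bdry \<phi> g = {\<alpha>\<in>visual_boundary TYPE('a). bdry_act (\<phi> g) \<alpha> = \<alpha>}"

text \<open>The point at distance r from p on the (unique) geodesic segment [p,x].\<close>
definition geod_pt :: "'a::metric_space \<Rightarrow> 'a \<Rightarrow> real \<Rightarrow> 'a" where
  "geod_pt p x r = (SOME \<gamma>. geodesic_seg \<gamma> p x) r"

text \<open>\<xi> lies in the closure of S \<subseteq> X in the cone topology on X \<union> \<partial>X with basepoint p:
  every basic neighbourhood U(c,r,\<epsilon>) = {z. d(p,z) > r, d(\<pi>_r z, c r) < \<epsilon>}
  (c the ray from p representing \<xi>) meets S.\<close>
definition in_cone_closure :: "'a::metric_space \<Rightarrow> 'a set \<Rightarrow> (real \<Rightarrow> 'a) set \<Rightarrow> bool" where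
  "in_cone_closure p S \<xi> \<longleftrightarrow>
     (\<exists>c\<in>\<xi>. c 0 = p \<and>
        (\<forall>r>0. \<forall>\<epsilon>>0. \<exists>x\<in>S. dist p x > r \<and> dist (geod_pt p x r) (c r) < \<epsilon>))"

text \<open>L(A) = closure of A x0 in X \<union> \<partial>X, intersected with \<partial>X.\<close>
definition limit_set :: "'a::metric_space \<Rightarrow> ('g \<Rightarrow> 'a \<Rightarrow> 'a) \<Rightarrow> 'a \<Rightarrow> 'g set \<Rightarrow> (real \<Rightarrow> 'a) set set" where
  "limit_set p \<phi> x0 A = {\<xi>\<in>visual_boundary TYPE('a). in_cone_closure p ((\<lambda>a. \<phi> a x0) ` A) \<xi>}"

definition centralizer :: "('g, 'm) monoid_scheme \<Rightarrow> 'g \<Rightarrow> 'g set" where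
  "centralizer G g = {v\<in>carrier G. g \<otimes>\<^bsub>G\<^esub> v = v \<otimes>\<^bsub>G\<^esub> g}"

definition transl_length :: "('a::metric_space \<Rightarrow> 'a) \<Rightarrow> real" where
  "transl_length f = (INF x. dist x (f x))"

definition Min_set :: "('a::metric_space \<Rightarrow> 'a) \<Rightarrow> 'a set" where
  "Min_set f = {x. dist x (f x) = transl_length f}"

text \<open>\<partial>Min(g): boundary points represented by a geodesic ray contained in Min(g).\<close>
definition bdry_of :: "'a::metric_space set \<Rightarrow> (real \<Rightarrow> 'a) set set" where
  "bdry_of C = {\<xi>\<in>visual_boundary TYPE('a). \<exists>c\<in>\<xi>. \<forall>t\<ge>0. c t \<in> C}"

end

theory Submission
  imports Defs
begin

text \<open>
  The displacement \<open>x \<mapsto> d(x, g x)\<close> of an isometry of a CAT(0) space is convex along geodesics.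
  Along a ray of bounded displacement it therefore never exceeds its initial value; starting the ray
  in \<open>Min(g)\<close>, which is nonempty for a geometric action, every fixed boundary point is represented
  by a ray inside \<open>Min(g)\<close>. Properness and cocompactness leave only finitely many conjugates
  \<open>h\<^sup>-\<^sup>1 g h\<close> that realise \<open>|g|\<close> on a compact set \<open>K\<close> with \<open>G K = X\<close>, so the centraliser \<open>Z\<^sub>g\<close>
  acts coboundedly on \<open>Min(g)\<close> and \<open>\<partial>Min(g) \<subseteq> L(Z\<^sub>g)\<close>. Conversely every point of the orbit
  \<open>Z\<^sub>g x\<^sub>0\<close> is moved by \<open>g\<close> exactly as far as \<open>x\<^sub>0\<close>; by convexity the same bound holds on geodesics
  from the base point into the orbit, hence along every ray to a limit point, which is thus fixed.
\<close>

section \<open>Euclidean comparison triangles\<close>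

lemma complex_triangle_exists:
  fixes A B C :: real
  assumes "0 \<le> B" "0 \<le> C" "A \<le> B + C" "B \<le> A + C" "C \<le> A + B"
  shows "\<exists>z::complex. cmod z = C \<and> cmod (z - of_real A) = B"
proof (cases "A = 0")
  case True
  then show ?thesis using assms by (intro exI[of _ "of_real C"]) auto
next
  case False
  then have A: "A > 0" using assms by linarith
  define u where "u = (A\<^sup>2 + C\<^sup>2 - B\<^sup>2) / (2 * A)"
  have "\<bar>A\<^sup>2 + C\<^sup>2 - B\<^sup>2\<bar> \<le> 2 * A * C"
  proof -
    have "(A - C)\<^sup>2 \<le> B\<^sup>2" using assms by (subst power2_le_iff_abs_le) auto
    moreover have "B\<^sup>2 \<le> (A + C)\<^sup>2" using assms by (intro power_mono) auto
    ultimately show ?thesis by (simp add: power2_eq_square algebra_simps abs_le_iff)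
  qed
  then have "\<bar>u\<bar> \<le> C" using A by (simp add: u_def abs_divide divide_le_eq mult_ac)
  then have u: "u\<^sup>2 \<le> C\<^sup>2" using assms(2) by (subst power2_le_iff_abs_le)
  define z where "z = Complex u (sqrt (C\<^sup>2 - u\<^sup>2))"
  have "cmod z = C" using u assms by (simp add: z_def cmod_def)
  moreover have "cmod (z - of_real A) = sqrt ((u - A)\<^sup>2 + (C\<^sup>2 - u\<^sup>2))"
    using u by (simp add: z_def cmod_def)
  moreover have "(u - A)\<^sup>2 + (C\<^sup>2 - u\<^sup>2) = B\<^sup>2"
    using A by (simp add: u_def power2_eq_square field_simps)
  ultimately show ?thesis using assms by (intro exI[of _ z]) simp
qed

lemma of_real_norm_mult_sgn: "of_real (cmod z) * sgn z = z"
  by (cases "z = 0") (simp_all add: sgn_div_norm scaleR_conv_of_real)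

lemma norm_sgn_diff_squared:
  fixes y z :: complex
  assumes "y \<noteq> 0" "z \<noteq> 0"
  shows "(cmod (sgn y - sgn z))\<^sup>2 * (cmod y * cmod z) = (cmod (y - z))\<^sup>2 - (cmod y - cmod z)\<^sup>2"
proof -
  have pos: "cmod y > 0" "cmod z > 0" using assms by auto
  have "(2 - (cmod (sgn y - sgn z))\<^sup>2) / 2 = inner (sgn y) (sgn z)"
    using dot_norm_neg[of "sgn y" "sgn z"] assms by (simp add: norm_sgn)
  also have "\<dots> = inner y z / (cmod y * cmod z)"
    by (simp add: sgn_div_norm divide_inverse_commute)
  also have "inner y z = ((cmod y)\<^sup>2 + (cmod z)\<^sup>2 - (cmod (y - z))\<^sup>2) / 2"
    using dot_norm_neg[of y z] by simp
  finally show ?thesis using pos by (simp add: field_simps power2_eq_square)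
qed

section \<open>Geodesics in CAT(0) spaces\<close>

lemma geodesic_seg_reverse:
  assumes "geodesic_seg \<gamma> x y"
  shows "geodesic_seg (\<lambda>s. \<gamma> (dist x y - s)) y x"
  using assms unfolding geodesic_seg_def by (auto simp: dist_commute)

lemma isometry_geodesic_seg:
  assumes "\<forall>x y. dist (f x) (f y) = dist x y" "geodesic_seg \<gamma> x y"
  shows "geodesic_seg (f \<circ> \<gamma>) (f x) (f y)"
  using assms unfolding geodesic_seg_def by simp

lemma geodesic_ray_initial_seg:
  assumes "geodesic_ray c" "0 \<le> l"
  shows "dist (c 0) (c l) = l" "geodesic_seg c (c 0) (c l)"
  using assms unfolding geodesic_ray_def geodesic_seg_def by auto

lemma CAT0_comparison:
  fixes x y z :: "'a::metric_space"
  assumes "CAT0 TYPE('a)" "geodesic_seg \<sigma>1 x y" "geodesic_seg \<sigma>2 x z"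
    "0 \<le> s" "s \<le> dist x y" "0 \<le> u" "u \<le> dist x z"
  obtains y' z' :: complex
  where "cmod y' = dist x y" "cmod z' = dist x z" "cmod (y' - z') = dist y z"
    "dist (\<sigma>1 s) (\<sigma>2 u) \<le> cmod (of_real s * sgn y' - of_real u * sgn z')"
proof -
  have ineq: "CAT0_ineq TYPE('a)" and "geodesic_space TYPE('a)"
    using assms(1) by (auto simp: CAT0_def)
  then obtain \<gamma>2 where g2: "geodesic_seg \<gamma>2 y z" unfolding geodesic_space_def by blast
  define \<gamma>3 where "\<gamma>3 = (\<lambda>t. \<sigma>2 (dist x z - t))"
  have g3: "geodesic_seg \<gamma>3 z x" using geodesic_seg_reverse[OF assms(3)] by (simp add: \<gamma>3_def)
  obtain z' :: complex where z': "cmod z' = dist x z" "cmod (z' - of_real (dist x y)) = dist y z"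
    using complex_triangle_exists[of "dist y z" "dist x z" "dist x y"]
    by (metis dist_commute dist_triangle zero_le_dist)
  define y' :: complex where "y' = of_real (dist x y)"
  have d: "dist 0 y' = dist x y" "dist y' z' = dist y z" "dist z' 0 = dist z x"
    using z' by (simp_all add: y'_def dist_complex_def norm_minus_commute dist_commute)
  define T where "T = side_pairs \<sigma>1 (dist x y) 0 y' \<union> side_pairs \<gamma>2 (dist y z) y' z'
                \<union> side_pairs \<gamma>3 (dist z x) z' 0"
  have no_fatter: "\<forall>(p, p')\<in>T. \<forall>(q, q')\<in>T. dist p q \<le> dist p' q'"
    using ineq assms(2) g2 g3 d unfolding CAT0_ineq_def T_def Let_def by blast
  have "(\<sigma>1 s, 0 + of_real s * sgn (y' - 0)) \<in> T"
    unfolding T_def side_pairs_def using assms(4,5) by blast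
  moreover have "(\<gamma>3 (dist z x - u), z' + of_real (dist z x - u) * sgn (0 - z')) \<in> T"
    unfolding T_def side_pairs_def using assms(6,7) by (auto simp: dist_commute)
  moreover have "\<gamma>3 (dist z x - u) = \<sigma>2 u" by (simp add: \<gamma>3_def dist_commute)
  moreover have "z' + of_real (dist z x - u) * sgn (0 - z') = of_real u * sgn z'"
    using z'(1) of_real_norm_mult_sgn[of z'] by (simp add: sgn_minus dist_commute algebra_simps)
  ultimately have "dist (\<sigma>1 s) (\<sigma>2 u) \<le> cmod (of_real s * sgn y' - of_real u * sgn z')"
    using no_fatter by (fastforce simp: dist_complex_def)
  moreover have "cmod y' = dist x y" "cmod (y' - z') = dist y z"
    using d by (simp_all add: y'_def dist_complex_def)
  ultimately show ?thesis using that z'(1) by blast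
qed

lemma CAT0_dist_common_start:
  fixes x y z :: "'a::metric_space"
  assumes "CAT0 TYPE('a)" "geodesic_seg \<sigma>1 x y" "geodesic_seg \<sigma>2 x z" "0 \<le> l" "l \<le> 1"
  shows "dist (\<sigma>1 (l * dist x y)) (\<sigma>2 (l * dist x z)) \<le> l * dist y z"
proof -
  obtain y' z' :: complex where c: "cmod y' = dist x y" "cmod z' = dist x z" "cmod (y' - z') = dist y z"
    and d: "dist (\<sigma>1 (l * dist x y)) (\<sigma>2 (l * dist x z)) \<le>
       cmod (of_real (l * dist x y) * sgn y' - of_real (l * dist x z) * sgn z')"
    using CAT0_comparison[OF assms(1-3), of "l * dist x y" "l * dist x z"] assms(4,5)
    by (auto simp: mult_left_le_one_le)
  have "of_real (l * cmod w) * sgn w = of_real l * w" for w :: complex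
    using of_real_norm_mult_sgn[of w] by (simp only: of_real_mult mult.assoc)
  then have "of_real (l * dist x y) * sgn y' - of_real (l * dist x z) * sgn z' = of_real l * (y' - z')"
    using c by (metis right_diff_distrib)
  then show ?thesis using c d assms(4) by (simp add: norm_mult)
qed

lemma CAT0_dist_common_start_same_speed:
  fixes x y z :: "'a::metric_space"
  assumes cat: "CAT0 TYPE('a)" and \<sigma>1: "geodesic_seg \<sigma>1 x y" and \<sigma>2: "geodesic_seg \<sigma>2 x z"
    and s: "0 \<le> s" "s \<le> dist x y" "s \<le> dist x z"
  shows "dist (\<sigma>1 s) (\<sigma>2 s) * dist x z \<le> 2 * s * dist y z"
proof (cases "dist x z = 0")
  case True
  then show ?thesis using s by simp
next
  case False
  define l where "l = s / dist x z"
  have l: "0 \<le> l" "l \<le> 1" "l * dist x z = s" using s False by (auto simp: l_def)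
  have "\<bar>dist x y - dist x z\<bar> \<le> dist y z"
    using dist_triangle[of x y z] dist_triangle[of x z y] by (simp add: dist_commute abs_le_iff)
  then have "\<bar>s - l * dist x y\<bar> \<le> l * dist y z"
    using l by (metis abs_mult abs_of_nonneg mult_left_mono right_diff_distrib abs_minus_commute)
  moreover have "dist (\<sigma>1 s) (\<sigma>1 (l * dist x y)) = \<bar>s - l * dist x y\<bar>"
    using \<sigma>1 s l unfolding geodesic_seg_def by (simp add: mult_left_le_one_le)
  moreover have "dist (\<sigma>1 (l * dist x y)) (\<sigma>2 s) \<le> l * dist y z"
    using CAT0_dist_common_start[OF cat \<sigma>1 \<sigma>2 l(1,2)] l(3) by simp
  ultimately have "dist (\<sigma>1 s) (\<sigma>2 s) \<le> 2 * l * dist y z"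
    using dist_triangle[of "\<sigma>1 s" "\<sigma>2 s" "\<sigma>1 (l * dist x y)"] by linarith
  then have "dist (\<sigma>1 s) (\<sigma>2 s) * dist x z \<le> 2 * l * dist y z * dist x z"
    by (simp add: mult_right_mono)
  then show ?thesis by (simp add: l(3)[symmetric] mult_ac)
qed

lemma CAT0_dist_same_speed_squared:
  fixes x y z :: "'a::metric_space"
  assumes "CAT0 TYPE('a)" "geodesic_seg \<sigma>1 x y" "geodesic_seg \<sigma>2 x z" "0 \<le> t"
    "t \<le> dist x y" "t \<le> dist x z" "0 < dist x y" "0 < dist x z"
  shows "(dist (\<sigma>1 t) (\<sigma>2 t))\<^sup>2 * (dist x y * dist x z)
    \<le> t\<^sup>2 * ((dist y z)\<^sup>2 - (dist x y - dist x z)\<^sup>2)"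
proof -
  obtain y' z' :: complex where c: "cmod y' = dist x y" "cmod z' = dist x z" "cmod (y' - z') = dist y z"
    and d: "dist (\<sigma>1 t) (\<sigma>2 t) \<le> cmod (of_real t * sgn y' - of_real t * sgn z')"
    using CAT0_comparison[OF assms(1-3), of t t] assms by auto
  have "y' \<noteq> 0" "z' \<noteq> 0" using c assms by auto
  have "dist (\<sigma>1 t) (\<sigma>2 t) \<le> t * cmod (sgn y' - sgn z')"
    using d assms(4) by (simp add: norm_mult flip: right_diff_distrib)
  then have "(dist (\<sigma>1 t) (\<sigma>2 t))\<^sup>2 * (dist x y * dist x z)
      \<le> (t * cmod (sgn y' - sgn z'))\<^sup>2 * (dist x y * dist x z)"
    by (intro mult_right_mono power_mono) auto
  also have "\<dots> = t\<^sup>2 * ((cmod (sgn y' - sgn z'))\<^sup>2 * (cmod y' * cmod z'))"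
    using c by (simp add: power_mult_distrib)
  also have "\<dots> = t\<^sup>2 * ((dist y z)\<^sup>2 - (dist x y - dist x z)\<^sup>2)"
    using norm_sgn_diff_squared[OF \<open>y' \<noteq> 0\<close> \<open>z' \<noteq> 0\<close>] c by simp
  finally show ?thesis .
qed

lemma CAT0_dist_geodesics_convex:
  fixes a b a' b' :: "'a::metric_space"
  assumes "CAT0 TYPE('a)" "geodesic_seg \<sigma>1 a b" "geodesic_seg \<sigma>2 a' b'"
    "dist a b = L" "dist a' b' = L" "0 \<le> s" "s \<le> L" "0 < L"
  shows "dist (\<sigma>1 s) (\<sigma>2 s) \<le> (1 - s / L) * dist a a' + (s / L) * dist b b'"
proof -
  obtain \<tau> where \<tau>: "geodesic_seg \<tau> a b'"
    using assms(1) unfolding CAT0_def geodesic_space_def by blast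
  define l where "l = s / L"
  have l: "0 \<le> l" "l \<le> 1" "l * L = s" using assms by (auto simp: l_def)
  have "dist (\<sigma>1 s) (\<tau> (l * dist a b')) \<le> l * dist b b'"
    using CAT0_dist_common_start[OF assms(1,2) \<tau> l(1,2)] assms(4) l(3) by simp
  moreover have "dist (\<tau> (l * dist a b')) (\<sigma>2 s) \<le> (1 - l) * dist a a'"
    using CAT0_dist_common_start[OF assms(1) geodesic_seg_reverse[OF \<tau>]
        geodesic_seg_reverse[OF assms(3)], of "1 - l"] l assms(5)
    by (simp add: dist_commute algebra_simps)
  ultimately have "dist (\<sigma>1 s) (\<sigma>2 s) \<le> l * dist b b' + (1 - l) * dist a a'"
    using dist_triangle[of "\<sigma>1 s" "\<sigma>2 s" "\<tau> (l * dist a b')"] by linarith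
  then show ?thesis by (simp add: l_def)
qed

section \<open>Asymptotic rays and the visual boundary\<close>

lemma CAT0_dist_segments_to_ray:
  fixes c :: "real \<Rightarrow> 'a::metric_space"
  assumes cat: "CAT0 TYPE('a)" and ray: "geodesic_ray c"
    and \<sigma>1: "geodesic_seg \<sigma>1 x (c s)" and \<sigma>2: "geodesic_seg \<sigma>2 x (c u)"
    and "s \<le> u" "0 \<le> t" "2 * dist x (c 0) + t + 1 \<le> s"
  shows "(dist (\<sigma>1 t) (\<sigma>2 t))\<^sup>2 * (s - dist x (c 0)) \<le> 4 * dist x (c 0) * t\<^sup>2"
proof -
  define a where "a = dist x (c 0)"
  define A where "A = dist x (c s)"
  define C where "C = dist x (c u)"
  define d where "d = dist (\<sigma>1 t) (\<sigma>2 t)"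
  have a0: "a \<ge> 0" by (simp add: a_def)
  have s: "2 * a + t + 1 \<le> s" using assms(7) by (simp add: a_def)
  have "0 \<le> s" using assms(6) s a0 by linarith
  then have cs: "dist (c s) (c u) = u - s" "dist (c 0) (c s) = s" "dist (c 0) (c u) = u"
    using ray assms(5) unfolding geodesic_ray_def by auto
  have A: "s - a \<le> A" "A \<le> s + a" "u - a \<le> C" "C \<le> u + a"
    using dist_triangle[of "c 0" "c s" x] dist_triangle[of x "c s" "c 0"]
      dist_triangle[of "c 0" "c u" x] dist_triangle[of x "c u" "c 0"] cs
    by (auto simp: A_def C_def a_def dist_commute)
  have AC: "C \<le> A + (u - s)" "A \<le> C + (u - s)"
    using dist_triangle[of x "c u" "c s"] dist_triangle[of x "c s" "c u"] cs
    by (auto simp: A_def C_def dist_commute)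
  have "t \<le> A" "t \<le> C" "0 < A" "0 < C"
    using A assms(5,6) s a0 by linarith+
  then have comparison: "d\<^sup>2 * (A * C) \<le> t\<^sup>2 * ((u - s)\<^sup>2 - (A - C)\<^sup>2)"
    using CAT0_dist_same_speed_squared[OF cat \<sigma>1 \<sigma>2 \<open>0 \<le> t\<close>] cs(1)
    unfolding d_def A_def C_def by simp
  have "(u - s)\<^sup>2 - (A - C)\<^sup>2 = ((u - s) - C + A) * ((u - s) + C - A)"
    by (simp add: power2_eq_square algebra_simps)
  also have "\<dots> \<le> (2 * a) * (2 * u - 2 * a)"
    using A AC assms(5,6) s a0 by (intro mult_mono) linarith+
  finally have "t\<^sup>2 * ((u - s)\<^sup>2 - (A - C)\<^sup>2) \<le> t\<^sup>2 * ((2 * a) * (2 * u - 2 * a))"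
    by (rule mult_left_mono) simp
  then have "d\<^sup>2 * (A * C) \<le> (4 * a * t\<^sup>2) * (u - a)"
    using comparison by (simp add: algebra_simps)
  moreover have "d\<^sup>2 * ((s - a) * (u - a)) \<le> d\<^sup>2 * (A * C)"
    using A assms(5,6) s a0 by (intro mult_left_mono mult_mono) auto
  ultimately have "(d\<^sup>2 * (s - a)) * (u - a) \<le> (4 * a * t\<^sup>2) * (u - a)"
    by (simp add: algebra_simps)
  moreover have "u - a > 0" using assms(5,6) s a0 by linarith
  ultimately show ?thesis unfolding d_def a_def by simp
qed

lemma CAT0_segment_to_ray_near_ray:
  fixes c :: "real \<Rightarrow> 'a::metric_space"
  assumes cat: "CAT0 TYPE('a)" and ray: "geodesic_ray c"
    and \<sigma>: "geodesic_seg \<sigma> x (c T)" and "0 \<le> t" "t + dist x (c 0) + 1 \<le> T"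
  shows "dist (c t) (\<sigma> t) \<le> 2 * dist x (c 0)"
proof -
  define a where "a = dist x (c 0)"
  define L where "L = dist x (c T)"
  have a0: "a \<ge> 0" by (simp add: a_def)
  have T: "T > 0" "t \<le> T" using assms(4,5) a0 unfolding a_def by linarith+
  have cT: "dist (c T) (c 0) = T" "geodesic_seg c (c 0) (c T)"
    using geodesic_ray_initial_seg[OF ray, of T] T by (simp_all add: dist_commute)
  have L: "T - a \<le> L" "L \<le> T + a"
    using dist_triangle[of "c 0" "c T" x] dist_triangle[of x "c T" "c 0"] cT
    by (auto simp: L_def a_def dist_commute)
  define l where "l = 1 - t / T"
  have l: "0 \<le> l" "l \<le> 1" "T - l * T = t" "L - l * L = t * L / T"
    using T assms(4) by (auto simp: l_def field_simps)
  \<comment> \<open>compare both segments from their common endpoint \<open>c T\<close>\<close>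
  have "dist (\<sigma> (L - l * dist (c T) x)) (c (T - l * dist (c T) (c 0))) \<le> l * dist x (c 0)"
    using CAT0_dist_common_start[OF cat geodesic_seg_reverse[OF \<sigma>]
        geodesic_seg_reverse[OF cT(2)] l(1,2)] cT(1)
    by (simp add: L_def dist_commute)
  then have "dist (\<sigma> (t * L / T)) (c t) \<le> a"
    using l a0 cT(1) mult_left_le_one_le[OF a0 l(1,2)]
    by (simp add: L_def a_def dist_commute)
  moreover have "dist (\<sigma> t) (\<sigma> (t * L / T)) \<le> a"
  proof -
    have "0 \<le> t * L / T" "t * L / T \<le> L" "t \<le> L"
      using T L assms(4,5) by (auto simp: a_def field_simps intro: mult_right_mono)
    then have "dist (\<sigma> t) (\<sigma> (t * L / T)) = \<bar>t - t * L / T\<bar>"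
      using \<sigma> assms(4) unfolding geodesic_seg_def L_def by auto
    also have "t - t * L / T = t / T * (T - L)"
      using T by (simp add: field_simps)
    also have "\<bar>t / T * (T - L)\<bar> = t / T * \<bar>T - L\<bar>"
      using T assms(4) by (simp add: abs_mult)
    also have "\<dots> \<le> 1 * a"
      using T L assms(4) by (intro mult_mono) (auto simp: field_simps)
    finally show ?thesis by simp
  qed
  ultimately show ?thesis
    using dist_triangle[of "c t" "\<sigma> t" "\<sigma> (t * L / T)"] by (simp add: a_def dist_commute)
qed

lemma CAT0_asymptotic_ray_from:
  fixes c :: "real \<Rightarrow> 'a::metric_space"
  assumes cat: "CAT0 TYPE('a)" and ray: "geodesic_ray c"
  obtains c' where "geodesic_ray c'" "c' 0 = x" "asymptotic c c'"
proof -
  have "\<forall>n::nat. \<exists>\<gamma>. geodesic_seg \<gamma> x (c (real n))"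
    using cat unfolding CAT0_def geodesic_space_def by blast
  then obtain \<sigma> where \<sigma>: "\<And>n. geodesic_seg (\<sigma> n) x (c (real n))" by metis
  define a where "a = dist x (c 0)"
  have a0: "a \<ge> 0" by (simp add: a_def)
  have large: "\<forall>\<^sub>F n in sequentially. r \<le> real n" for r
    using filterlim_real_sequentially unfolding filterlim_at_top by blast
  \<comment> \<open>the geodesics from \<open>x\<close> to \<open>c n\<close> converge pointwise to the required ray
    (Bridson--Haefliger II.8.2)\<close>
  have Cauchy: "Cauchy (\<lambda>n. \<sigma> n t)" if t: "0 \<le> t" for t
  proof (rule metric_CauchyI)
    fix e :: real assume e: "0 < e"
    obtain N :: nat where N: "2 * a + t + 1 + 4 * a * t\<^sup>2 / e\<^sup>2 \<le> real N"
      using real_arch_simple by blast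
    have close: "dist (\<sigma> n t) (\<sigma> m t) < e" if "N \<le> n" "n \<le> m" for n m
    proof -
      have "0 \<le> 4 * a * t\<^sup>2 / e\<^sup>2" "real N \<le> real n" using a0 that(1) by simp_all
      then have n: "2 * a + t + 1 \<le> real n" and "4 * a * t\<^sup>2 / e\<^sup>2 < real n - a"
        using N a0 t by linarith+
      then have "4 * a * t\<^sup>2 < (real n - a) * e\<^sup>2"
        using e by (simp add: pos_divide_less_eq)
      moreover have "(dist (\<sigma> n t) (\<sigma> m t))\<^sup>2 * (real n - a) \<le> 4 * a * t\<^sup>2"
        using CAT0_dist_segments_to_ray[OF cat ray \<sigma> \<sigma>, of n m t] n that(2) t
        by (simp add: a_def)
      ultimately have "(dist (\<sigma> n t) (\<sigma> m t))\<^sup>2 * (real n - a) < e\<^sup>2 * (real n - a)"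
        using mult.commute[of "real n - a" "e\<^sup>2"] by linarith
      then have "(dist (\<sigma> n t) (\<sigma> m t))\<^sup>2 < e\<^sup>2"
        by (rule mult_right_less_imp_less) (use n a0 t in linarith)
      then show ?thesis using e by (simp add: power_less_imp_less_base)
    qed
    show "\<exists>M. \<forall>m\<ge>M. \<forall>n\<ge>M. dist (\<sigma> m t) (\<sigma> n t) < e"
    proof (intro exI allI impI)
      fix m n assume "N \<le> m" "N \<le> n"
      then show "dist (\<sigma> m t) (\<sigma> n t) < e"
        using close[of m n] close[of n m] by (cases "m \<le> n") (auto simp: dist_commute)
    qed
  qed
  have "\<exists>l. (\<lambda>n. \<sigma> n t) \<longlonglongrightarrow> l" if "0 \<le> t" for t
    using cat Cauchy[OF that] unfolding CAT0_def complete_def by blast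
  then obtain c' where lim: "\<And>t. 0 \<le> t \<Longrightarrow> (\<lambda>n. \<sigma> n t) \<longlonglongrightarrow> c' t"
    by metis
  have "geodesic_ray c'"
    unfolding geodesic_ray_def
  proof (intro allI impI)
    fix s t :: real assume st: "0 \<le> s" "0 \<le> t"
    have "\<forall>\<^sub>F n in sequentially. dist (\<sigma> n s) (\<sigma> n t) = \<bar>s - t\<bar>"
      using large[of "s + t + a"]
    proof eventually_elim
      case (elim n)
      then have "s \<le> dist x (c (real n))" "t \<le> dist x (c (real n))"
        using dist_triangle[of "c 0" "c (real n)" x] geodesic_ray_initial_seg(1)[OF ray, of n] st
        by (auto simp: a_def dist_commute)
      then show ?case using \<sigma>[of n] st unfolding geodesic_seg_def by auto
    qed
    then have "(\<lambda>n. dist (\<sigma> n s) (\<sigma> n t)) \<longlonglongrightarrow> \<bar>s - t\<bar>"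
      by (rule tendsto_eventually)
    moreover have "(\<lambda>n. dist (\<sigma> n s) (\<sigma> n t)) \<longlonglongrightarrow> dist (c' s) (c' t)"
      by (intro tendsto_dist lim st)
    ultimately show "dist (c' s) (c' t) = \<bar>s - t\<bar>" using LIMSEQ_unique by blast
  qed
  moreover have "c' 0 = x"
    using lim[of 0] \<sigma> unfolding geodesic_seg_def by (simp add: LIMSEQ_const_iff)
  moreover have "asymptotic c c'"
    unfolding asymptotic_def
  proof (intro exI allI impI)
    fix t :: real assume t: "0 \<le> t"
    have "\<forall>\<^sub>F n in sequentially. dist (c t) (\<sigma> n t) \<le> 2 * a"
      using large[of "t + a + 1"]
      by eventually_elim (use CAT0_segment_to_ray_near_ray[OF cat ray \<sigma> t] in \<open>simp add: a_def\<close>)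
    then show "dist (c t) (c' t) \<le> 2 * a"
      by (intro tendsto_upperbound[OF tendsto_dist[OF tendsto_const lim[OF t]]]) simp_all
  qed
  ultimately show ?thesis using that by blast
qed

lemma asymptotic_refl: "asymptotic c c"
  unfolding asymptotic_def by (intro exI[of _ 0]) simp

lemma asymptotic_sym: "asymptotic c c' \<Longrightarrow> asymptotic c' c"
  unfolding asymptotic_def by (simp add: dist_commute)

lemma asymptotic_trans:
  assumes "asymptotic c c'" "asymptotic c' c''"
  shows "asymptotic c c''"
proof -
  obtain B1 B2 where "\<forall>t\<ge>0. dist (c t) (c' t) \<le> B1" "\<forall>t\<ge>0. dist (c' t) (c'' t) \<le> B2"
    using assms unfolding asymptotic_def by blast
  then have "\<forall>t\<ge>0. dist (c t) (c'' t) \<le> B1 + B2"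
    by (meson add_mono dist_triangle order_trans)
  then show ?thesis unfolding asymptotic_def by blast
qed

lemma isometry_asymptotic:
  assumes "\<forall>x y. dist (f x) (f y) = dist x y" "asymptotic c c'"
  shows "asymptotic (f \<circ> c) (f \<circ> c')"
  using assms unfolding asymptotic_def by simp

lemma isometry_geodesic_ray:
  assumes "\<forall>x y. dist (f x) (f y) = dist x y" "geodesic_ray c"
  shows "geodesic_ray (f \<circ> c)"
  using assms unfolding geodesic_ray_def by simp

lemma ray_class_eq_iff:
  assumes "geodesic_ray c'"
  shows "ray_class c = ray_class c' \<longleftrightarrow> asymptotic c c'"
  using assms asymptotic_refl asymptotic_sym asymptotic_trans
  unfolding ray_class_def by blast

lemma visual_boundary_ray_class:
  assumes "\<xi> \<in> visual_boundary TYPE('a::metric_space)" "c \<in> \<xi>"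
  shows "geodesic_ray c" "\<xi> = ray_class c"
proof -
  obtain c0 :: "real \<Rightarrow> 'a" where "geodesic_ray c0" "\<xi> = ray_class c0"
    using assms(1) unfolding visual_boundary_def by blast
  then show "geodesic_ray c" "\<xi> = ray_class c"
    using assms(2) ray_class_eq_iff[of c c0] asymptotic_sym unfolding ray_class_def by blast+
qed

lemma CAT0_visual_boundary_ray_from:
  assumes "CAT0 TYPE('a::metric_space)" "\<xi> \<in> visual_boundary TYPE('a)"
  obtains c where "c \<in> \<xi>" "c 0 = x"
proof -
  obtain c0 :: "real \<Rightarrow> 'a" where "geodesic_ray c0" "\<xi> = ray_class c0"
    using assms(2) unfolding visual_boundary_def by blast
  then show ?thesis
    using CAT0_asymptotic_ray_from[OF assms(1)] that unfolding ray_class_def by blast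
qed

lemma bdry_act_fixed_iff:
  assumes f: "\<forall>x y. dist (f x) (f y) = dist x y"
    and \<xi>: "\<xi> \<in> visual_boundary TYPE('a::metric_space)" and c: "c \<in> \<xi>"
  shows "bdry_act f \<xi> = \<xi> \<longleftrightarrow> asymptotic c (f \<circ> c)"
proof -
  define c1 where "c1 = (SOME c. c \<in> \<xi>)"
  have "c1 \<in> \<xi>" unfolding c1_def using c by (rule someI[where P = "\<lambda>c. c \<in> \<xi>"])
  then have "asymptotic (f \<circ> c1) (f \<circ> c)"
    using visual_boundary_ray_class[OF \<xi>] c f isometry_asymptotic
    unfolding ray_class_def by (metis asymptotic_sym mem_Collect_eq)
  then have "bdry_act f \<xi> = ray_class (f \<circ> c)"
    unfolding bdry_act_def c1_def[symmetric]
    using ray_class_eq_iff isometry_geodesic_ray[OF f visual_boundary_ray_class(1)[OF \<xi> c]] by blast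
  then show ?thesis
    using visual_boundary_ray_class[OF \<xi> c] ray_class_eq_iff asymptotic_sym
      isometry_geodesic_ray[OF f] by metis
qed

section \<open>Displacement functions of isometries\<close>

lemma transl_length_le: "transl_length f \<le> dist x (f x)"
  unfolding transl_length_def by (rule cINF_lower) (auto intro: bdd_belowI[of _ 0])

lemma transl_length_less_iff: "transl_length f < b \<longleftrightarrow> (\<exists>x. dist x (f x) < b)"
  unfolding transl_length_def by (subst cINF_less_iff) (auto intro: bdd_belowI[of _ 0])

lemma CAT0_displacement_segment_le:
  fixes f :: "'a::metric_space \<Rightarrow> 'a"
  assumes cat: "CAT0 TYPE('a)" and f: "\<forall>x y. dist (f x) (f y) = dist x y"
    and \<gamma>: "geodesic_seg \<gamma> p x" and t: "0 \<le> t" "t \<le> dist p x"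
  shows "dist (\<gamma> t) (f (\<gamma> t)) \<le> max (dist p (f p)) (dist x (f x))"
proof (cases "dist p x = 0")
  case True
  then show ?thesis using \<gamma> t unfolding geodesic_seg_def by simp
next
  case False
  define L where "L = dist p x"
  define m where "m = max (dist p (f p)) (dist x (f x))"
  have "dist (\<gamma> t) ((f \<circ> \<gamma>) t) \<le> (1 - t / L) * dist p (f p) + (t / L) * dist x (f x)"
    using CAT0_dist_geodesics_convex[OF cat \<gamma> isometry_geodesic_seg[OF f \<gamma>]] f t False
    by (simp add: L_def)
  also have "\<dots> \<le> (1 - t / L) * m + (t / L) * m"
    using t False by (intro add_mono mult_left_mono) (auto simp: L_def m_def)
  also have "\<dots> = m"
    by (simp add: algebra_simps)
  finally show ?thesis by (simp add: m_def)
qed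

lemma CAT0_displacement_ray_le:
  fixes f :: "'a::metric_space \<Rightarrow> 'a"
  assumes cat: "CAT0 TYPE('a)" and f: "\<forall>x y. dist (f x) (f y) = dist x y"
    and ray: "geodesic_ray c" and bounded: "\<And>t. 0 \<le> t \<Longrightarrow> dist (c t) (f (c t)) \<le> B"
    and t: "0 \<le> t"
  shows "dist (c t) (f (c t)) \<le> dist (c 0) (f (c 0))"
proof -
  define d0 where "d0 = dist (c 0) (f (c 0))"
  have bound: "dist (c t) (f (c t)) \<le> d0 + t * \<bar>B\<bar> * inverse w" if w: "t < w" for w
  proof -
    have "dist (c t) ((f \<circ> c) t) \<le> (1 - t / w) * d0 + (t / w) * dist (c w) (f (c w))"
      using CAT0_dist_geodesics_convex[OF cat geodesic_ray_initial_seg(2)[OF ray]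
          isometry_geodesic_seg[OF f geodesic_ray_initial_seg(2)[OF ray]]]
        geodesic_ray_initial_seg(1)[OF ray] f t w
      by (simp add: d0_def)
    also have "\<dots> \<le> d0 + (t / w) * \<bar>B\<bar>"
    proof (rule add_mono)
      show "(1 - t / w) * d0 \<le> d0"
        using t w by (intro mult_left_le_one_le) (auto simp: d0_def)
      show "(t / w) * dist (c w) (f (c w)) \<le> (t / w) * \<bar>B\<bar>"
        using bounded[of w] t w by (intro mult_left_mono) auto
    qed
    finally show ?thesis by (simp add: field_simps)
  qed
  have "\<forall>\<^sub>F w in at_top. dist (c t) (f (c t)) \<le> d0 + t * \<bar>B\<bar> * inverse w"
    using eventually_gt_at_top[of t] by eventually_elim (rule bound)
  moreover have "((\<lambda>w. d0 + t * \<bar>B\<bar> * inverse w) \<longlongrightarrow> d0) at_top"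
    using tendsto_add[OF tendsto_const tendsto_mult[OF tendsto_const tendsto_inverse_0_at_top[OF filterlim_ident]]]
    by simp
  ultimately show ?thesis unfolding d0_def
    by (intro tendsto_lowerbound) auto
qed

lemma CAT0_fixed_bdry_subset_bdry_Min_set:
  fixes f :: "'a::metric_space \<Rightarrow> 'a"
  assumes cat: "CAT0 TYPE('a)" and f: "\<forall>x y. dist (f x) (f y) = dist x y"
    and "x \<in> Min_set f" and \<xi>: "\<xi> \<in> visual_boundary TYPE('a)" "bdry_act f \<xi> = \<xi>"
  shows "\<xi> \<in> bdry_of (Min_set f)"
proof -
  obtain c where c: "c \<in> \<xi>" "c 0 = x" using CAT0_visual_boundary_ray_from[OF cat \<xi>(1)] by blast
  have ray: "geodesic_ray c" using visual_boundary_ray_class(1)[OF \<xi>(1) c(1)] .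
  obtain B where B: "\<And>t. 0 \<le> t \<Longrightarrow> dist (c t) (f (c t)) \<le> B"
    using bdry_act_fixed_iff[OF f \<xi>(1) c(1)] \<xi>(2) unfolding asymptotic_def by auto
  have "dist (c t) (f (c t)) = transl_length f" if "0 \<le> t" for t
  proof (rule antisym)
    show "dist (c t) (f (c t)) \<le> transl_length f"
      using CAT0_displacement_ray_le[OF cat f ray B that] \<open>x \<in> Min_set f\<close> c(2)
      unfolding Min_set_def by simp
  qed (rule transl_length_le)
  then have "\<forall>t\<ge>0. c t \<in> Min_set f" unfolding Min_set_def by simp
  then show ?thesis unfolding bdry_of_def using \<xi>(1) c(1) by blast
qed

section \<open>The cone topology\<close>

lemma geodesic_seg_geod_pt:
  assumes "CAT0 TYPE('a::metric_space)"
  shows "geodesic_seg (geod_pt p x) p (x::'a)"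
proof -
  have "\<exists>\<gamma>. geodesic_seg \<gamma> p x" using assms unfolding CAT0_def geodesic_space_def by blast
  then have "geodesic_seg (SOME \<gamma>. geodesic_seg \<gamma> p x) p x" by (rule someI_ex)
  then show ?thesis unfolding geod_pt_def[abs_def] by (simp add: eta_contract_eq)
qed

lemma CAT0_geod_pt_near_ray:
  fixes c :: "real \<Rightarrow> 'a::metric_space"
  assumes cat: "CAT0 TYPE('a)" and ray: "geodesic_ray c" and "c 0 = p"
    and "dist (c t) x \<le> K" "0 < r" "r + K < t"
  shows "r < dist p x" "dist (geod_pt p x r) (c r) * t \<le> 2 * r * K"
proof -
  have "r \<le> t" "0 \<le> t" using assms(4-6) zero_le_dist[of "c t" x] by linarith+
  then have t: "dist p (c t) = t" "geodesic_seg c p (c t)"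
    using geodesic_ray_initial_seg[OF ray, of t] assms(3) by auto
  then show "r < dist p x"
    using dist_triangle[of p "c t" x] assms(4-6) by (simp add: dist_commute)
  then have "dist (geod_pt p x r) (c r) * t \<le> 2 * r * dist x (c t)"
    using CAT0_dist_common_start_same_speed[OF cat geodesic_seg_geod_pt[OF cat] t(2), of r]
      t(1) \<open>r \<le> t\<close> \<open>0 < r\<close> by fastforce
  also have "\<dots> \<le> 2 * r * K"
    using assms by (simp add: dist_commute)
  finally show "dist (geod_pt p x r) (c r) * t \<le> 2 * r * K" .
qed

lemma CAT0_in_cone_closure_if_near_ray:
  fixes c :: "real \<Rightarrow> 'a::metric_space"
  assumes cat: "CAT0 TYPE('a)" and ray: "geodesic_ray c" and "c \<in> \<xi>" "c 0 = p"
    and near: "\<And>t. 0 \<le> t \<Longrightarrow> \<exists>x\<in>S. dist (c t) x \<le> K"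
  shows "in_cone_closure p S \<xi>"
  unfolding in_cone_closure_def
proof (intro bexI[of _ c] conjI allI impI)
  fix r \<epsilon> :: real assume r: "r > 0" and \<epsilon>: "\<epsilon> > 0"
  have K: "0 \<le> K" using near[of 0] by (meson order_trans zero_le_dist order_refl)
  define t where "t = r + K + 2 * r * K / \<epsilon> + 1"
  have "0 \<le> 2 * r * K / \<epsilon>" using r K \<epsilon> by simp
  moreover have "\<epsilon> * t = \<epsilon> * (r + K + 1) + 2 * r * K"
    using \<epsilon> by (simp add: t_def field_simps)
  moreover have "0 < \<epsilon> * (r + K + 1)" using r K \<epsilon> by simp
  ultimately have t: "r + K < t" "2 * r * K < \<epsilon> * t"
    unfolding t_def by linarith+
  obtain x where x: "x \<in> S" "dist (c t) x \<le> K" using near[of t] t r K by auto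
  have "dist (geod_pt p x r) (c r) * t < \<epsilon> * t"
    using CAT0_geod_pt_near_ray(2)[OF cat ray \<open>c 0 = p\<close> x(2) r t(1)] t(2) by linarith
  then have "dist (geod_pt p x r) (c r) < \<epsilon>"
    using t r K by (simp add: mult_less_cancel_right)
  then show "\<exists>x\<in>S. dist p x > r \<and> dist (geod_pt p x r) (c r) < \<epsilon>"
    using CAT0_geod_pt_near_ray(1)[OF cat ray \<open>c 0 = p\<close> x(2) r t(1)] x(1) by blast
qed (use assms in auto)

lemma CAT0_bdry_of_in_cone_closure:
  fixes C :: "'a::metric_space set"
  assumes cat: "CAT0 TYPE('a)" and near: "\<And>x. x \<in> C \<Longrightarrow> \<exists>y\<in>S. dist x y \<le> D"
    and \<xi>: "\<xi> \<in> bdry_of C"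
  shows "in_cone_closure p S \<xi>"
proof -
  obtain c' where vb: "\<xi> \<in> visual_boundary TYPE('a)" and c': "c' \<in> \<xi>" "\<And>t. 0 \<le> t \<Longrightarrow> c' t \<in> C"
    using \<xi> unfolding bdry_of_def by blast
  obtain c where c: "c \<in> \<xi>" "c 0 = p" using CAT0_visual_boundary_ray_from[OF cat vb] by blast
  have ray: "geodesic_ray c" using visual_boundary_ray_class(1)[OF vb c(1)] .
  have "c' \<in> ray_class c" using c'(1) visual_boundary_ray_class(2)[OF vb c(1)] by simp
  then have "asymptotic c c'" unfolding ray_class_def by simp
  then obtain B where B: "\<And>t. 0 \<le> t \<Longrightarrow> dist (c t) (c' t) \<le> B"
    unfolding asymptotic_def by blast
  have "\<exists>y\<in>S. dist (c t) y \<le> B + D" if t: "0 \<le> t" for t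
  proof -
    obtain y where y: "y \<in> S" "dist (c' t) y \<le> D" using near[OF c'(2)[OF t]] by blast
    have "dist (c t) y \<le> B + D"
      using B[OF t] y(2) dist_triangle[of "c t" y "c' t"] by linarith
    then show ?thesis using y(1) by blast
  qed
  then show ?thesis by (rule CAT0_in_cone_closure_if_near_ray[OF cat ray c])
qed

lemma CAT0_cone_closure_fixed:
  fixes f :: "'a::metric_space \<Rightarrow> 'a"
  assumes cat: "CAT0 TYPE('a)" and f: "\<forall>x y. dist (f x) (f y) = dist x y"
    and S: "\<And>x. x \<in> S \<Longrightarrow> dist x (f x) \<le> M"
    and \<xi>: "\<xi> \<in> visual_boundary TYPE('a)" "in_cone_closure p S \<xi>"
  shows "bdry_act f \<xi> = \<xi>"
proof -
  obtain c where c: "c \<in> \<xi>" "c 0 = p"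
    and approx: "\<And>r \<epsilon>. r > 0 \<Longrightarrow> \<epsilon> > 0 \<Longrightarrow> \<exists>x\<in>S. dist p x > r \<and> dist (geod_pt p x r) (c r) < \<epsilon>"
    using \<xi>(2) unfolding in_cone_closure_def by blast
  define M' where "M' = max (dist p (f p)) M"
  \<comment> \<open>\<open>c t\<close> is close to a point on a geodesic from \<open>p\<close> into \<open>S\<close>, whose displacement is at
    most \<open>M'\<close> by convexity\<close>
  have "dist (c t) (f (c t)) \<le> M' + 2" if t: "0 \<le> t" for t
  proof (cases "t = 0")
    case True
    then show ?thesis using c(2) by (simp add: M'_def)
  next
    case False
    then obtain x where x: "x \<in> S" "t < dist p x" and close: "dist (geod_pt p x t) (c t) < 1"
      using approx[of t 1] t by auto
    define y where "y = geod_pt p x t"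
    have "dist y (f y) \<le> max (dist p (f p)) (dist x (f x))"
      unfolding y_def using CAT0_displacement_segment_le[OF cat f geodesic_seg_geod_pt[OF cat] t] x(2)
      by simp
    also have "\<dots> \<le> M'" using S[OF x(1)] by (simp add: M'_def)
    finally have "dist y (f y) \<le> M'" .
    moreover have "dist (c t) (f (c t)) \<le> dist (c t) y + dist y (f (c t))"
      "dist y (f (c t)) \<le> dist y (f y) + dist (f y) (f (c t))"
      by (rule dist_triangle)+
    moreover have "dist (c t) y < 1" "dist (f y) (f (c t)) < 1"
      using close f by (simp_all add: y_def dist_commute)
    ultimately show ?thesis by linarith
  qed
  then have "asymptotic c (f \<circ> c)" unfolding asymptotic_def by (intro exI[of _ "M' + 2"]) simp
  then show ?thesis using bdry_act_fixed_iff[OF f \<xi>(1) c(1)] by blast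
qed

section \<open>Geometric group actions\<close>

lemma isometric_action_isometry:
  assumes "isometric_action G \<phi>" "h \<in> carrier G"
  shows "\<forall>x y. dist (\<phi> h x) (\<phi> h y) = dist x y"
  using assms unfolding isometric_action_def by blast

lemma isometric_action_mult:
  assumes "isometric_action G \<phi>" "h \<in> carrier G" "k \<in> carrier G"
  shows "\<phi> (h \<otimes>\<^bsub>G\<^esub> k) x = \<phi> h (\<phi> k x)"
  using assms unfolding isometric_action_def by simp

lemma isometric_action_inv:
  assumes "group G" "isometric_action G \<phi>" "h \<in> carrier G"
  shows "\<phi> (inv\<^bsub>G\<^esub> h) (\<phi> h x) = x" "\<phi> h (\<phi> (inv\<^bsub>G\<^esub> h) x) = x"
proof -
  interpret G: group G by fact
  have "\<phi> \<one>\<^bsub>G\<^esub> = id" using assms(2) unfolding isometric_action_def by simp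
  then show "\<phi> (inv\<^bsub>G\<^esub> h) (\<phi> h x) = x" "\<phi> h (\<phi> (inv\<^bsub>G\<^esub> h) x) = x"
    using isometric_action_mult[OF assms(2), of "inv\<^bsub>G\<^esub> h" h x]
      isometric_action_mult[OF assms(2), of h "inv\<^bsub>G\<^esub> h" x] assms(3)
    by simp_all
qed

lemma isometric_action_conj_displacement:
  assumes "group G" "isometric_action G \<phi>" "g \<in> carrier G" "h \<in> carrier G"
  shows "dist k (\<phi> (inv\<^bsub>G\<^esub> h \<otimes>\<^bsub>G\<^esub> g \<otimes>\<^bsub>G\<^esub> h) k) = dist (\<phi> h k) (\<phi> g (\<phi> h k))"
proof -
  interpret G: group G by fact
  have "\<phi> (inv\<^bsub>G\<^esub> h \<otimes>\<^bsub>G\<^esub> g \<otimes>\<^bsub>G\<^esub> h) k = \<phi> (inv\<^bsub>G\<^esub> h) (\<phi> g (\<phi> h k))"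
    using assms(3,4) by (simp add: isometric_action_mult[OF assms(2)])
  then show ?thesis
    using isometric_action_isometry[OF assms(2,4)] isometric_action_inv(2)[OF assms(1,2,4)]
    by metis
qed

lemma centralizer_displacement:
  assumes "isometric_action G \<phi>" "g \<in> carrier G" "z \<in> centralizer G g"
  shows "dist (\<phi> z x) (\<phi> g (\<phi> z x)) = dist x (\<phi> g x)"
proof -
  have z: "z \<in> carrier G" "g \<otimes>\<^bsub>G\<^esub> z = z \<otimes>\<^bsub>G\<^esub> g"
    using assms(3) unfolding centralizer_def by auto
  then have "\<phi> g (\<phi> z x) = \<phi> z (\<phi> g x)"
    using isometric_action_mult[OF assms(1)] assms(2) by metis
  then show ?thesis using isometric_action_isometry[OF assms(1) z(1)] by simp
qed

lemma conjugate_eq_imp_centralizer: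
  assumes "group G" "g \<in> carrier G" "h \<in> carrier G" "h' \<in> carrier G"
    "inv\<^bsub>G\<^esub> h \<otimes>\<^bsub>G\<^esub> g \<otimes>\<^bsub>G\<^esub> h = inv\<^bsub>G\<^esub> h' \<otimes>\<^bsub>G\<^esub> g \<otimes>\<^bsub>G\<^esub> h'"
  shows "h \<otimes>\<^bsub>G\<^esub> inv\<^bsub>G\<^esub> h' \<in> centralizer G g"
proof -
  interpret G: group G by fact
  have "g \<otimes>\<^bsub>G\<^esub> h = h \<otimes>\<^bsub>G\<^esub> (inv\<^bsub>G\<^esub> h' \<otimes>\<^bsub>G\<^esub> g \<otimes>\<^bsub>G\<^esub> h')"
    using assms(2-5) by (metis G.inv_closed G.m_assoc G.m_closed G.inv_solve_left')
  then have "g \<otimes>\<^bsub>G\<^esub> h \<otimes>\<^bsub>G\<^esub> inv\<^bsub>G\<^esub> h' = h \<otimes>\<^bsub>G\<^esub> inv\<^bsub>G\<^esub> h' \<otimes>\<^bsub>G\<^esub> g"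
    using assms(2-4) by (simp add: G.m_assoc)
  then show ?thesis
    using assms(2-4) unfolding centralizer_def by (simp add: G.m_assoc)
qed

lemma isometry_continuous_on:
  assumes "\<forall>x y. dist (f x) (f y) = dist x y"
  shows "continuous_on S f"
  unfolding continuous_on_iff using assms by metis

lemma properly_acting_locally_finite:
  assumes grp: "group G" and iso: "isometric_action G \<phi>" and pa: "properly_acting G \<phi>"
  obtains \<rho> where "\<rho> > 0" "\<And>q. finite {h\<in>carrier G. \<exists>x\<in>ball k0 \<rho>. \<phi> h x \<in> ball q \<rho>}"
proof -
  interpret G: group G by fact
  obtain r where r: "r > 0" and fin: "finite {h\<in>carrier G. \<phi> h ` ball k0 r \<inter> ball k0 r \<noteq> {}}"
    using pa unfolding properly_acting_def by blast
  define \<rho> where "\<rho> = r / 4"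
  have "finite {h\<in>carrier G. \<exists>x\<in>ball k0 \<rho>. \<phi> h x \<in> ball q \<rho>}" (is "finite ?H") for q
  proof (cases "?H = {}")
    case True
    then show ?thesis by (metis finite.emptyI)
  next
    case False
    then obtain h0 x0 where h0: "h0 \<in> carrier G" "x0 \<in> ball k0 \<rho>" "\<phi> h0 x0 \<in> ball q \<rho>"
      by blast
    \<comment> \<open>translating back by \<open>h0\<close> maps \<open>?H\<close> into the finite set given by properness at \<open>k0\<close>\<close>
    have "(\<lambda>h. inv\<^bsub>G\<^esub> h0 \<otimes>\<^bsub>G\<^esub> h) ` ?H \<subseteq> {h\<in>carrier G. \<phi> h ` ball k0 r \<inter> ball k0 r \<noteq> {}}"
    proof clarify
      fix h x assume h: "h \<in> carrier G" "x \<in> ball k0 \<rho>" "\<phi> h x \<in> ball q \<rho>"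
      have "dist x0 (\<phi> (inv\<^bsub>G\<^esub> h0) (\<phi> h x)) = dist (\<phi> h x) (\<phi> h0 x0)"
        using isometric_action_isometry[OF iso G.inv_closed[OF h0(1)]]
          isometric_action_inv(1)[OF grp iso h0(1), of x0] by (metis dist_commute)
      moreover have "dist (\<phi> h x) (\<phi> h0 x0) < 2 * \<rho>"
        using h(3) h0(3) dist_triangle[of "\<phi> h x" "\<phi> h0 x0" q] by (simp add: dist_commute)
      moreover have "dist k0 x0 < \<rho>" using h0(2) by simp
      ultimately have "dist k0 (\<phi> (inv\<^bsub>G\<^esub> h0) (\<phi> h x)) < r"
        using dist_triangle[of k0 "\<phi> (inv\<^bsub>G\<^esub> h0) (\<phi> h x)" x0] r unfolding \<rho>_def by linarith
      then have "\<phi> (inv\<^bsub>G\<^esub> h0 \<otimes>\<^bsub>G\<^esub> h) x \<in> ball k0 r"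
        using h h0 by (simp add: isometric_action_mult[OF iso])
      moreover have "x \<in> ball k0 r" using h(2) r by (simp add: \<rho>_def)
      ultimately show "inv\<^bsub>G\<^esub> h0 \<otimes>\<^bsub>G\<^esub> h \<in> carrier G \<and>
          \<phi> (inv\<^bsub>G\<^esub> h0 \<otimes>\<^bsub>G\<^esub> h) ` ball k0 r \<inter> ball k0 r \<noteq> {}"
        using h(1) h0(1) by blast
    qed
    then have "finite ((\<lambda>h. inv\<^bsub>G\<^esub> h0 \<otimes>\<^bsub>G\<^esub> h) ` ?H)" using fin by (rule finite_subset)
    moreover have "inj_on (\<lambda>h. inv\<^bsub>G\<^esub> h0 \<otimes>\<^bsub>G\<^esub> h) ?H"
      using h0(1) by (intro inj_onI) (simp add: G.Units_eq)
    ultimately show ?thesis by (rule finite_imageD)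
  qed
  moreover have "\<rho> > 0" using r by (simp add: \<rho>_def)
  ultimately show ?thesis using that by blast
qed

lemma properly_acting_finite_compact:
  assumes grp: "group G" and iso: "isometric_action G \<phi>" and pa: "properly_acting G \<phi>"
    and K: "compact K"
  shows "finite {h\<in>carrier G. \<phi> h ` K \<inter> K \<noteq> {}}"
proof -
  have "\<exists>\<rho>. \<rho> > 0 \<and> (\<forall>q. finite {h\<in>carrier G. \<exists>x\<in>ball k \<rho>. \<phi> h x \<in> ball q \<rho>})" for k
    by (rule properly_acting_locally_finite[OF grp iso pa, of k]) blast
  then obtain \<rho> where \<rho>: "\<And>k. \<rho> k > 0"
    and fin: "\<And>k q. finite {h\<in>carrier G. \<exists>x\<in>ball k (\<rho> k). \<phi> h x \<in> ball q (\<rho> k)}"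
    using choice[of "\<lambda>k \<rho>. \<rho> > 0 \<and> (\<forall>q. finite {h\<in>carrier G. \<exists>x\<in>ball k \<rho>. \<phi> h x \<in> ball q \<rho>})"]
    by blast
  have cover: "\<exists>I. finite I \<and> K \<subseteq> (\<Union>k\<in>I. ball k (r k))" if r: "\<And>k. r k > 0" for r
  proof -
    have cov: "K \<subseteq> (\<Union>k\<in>K. ball k (r k))"
    proof
      fix x assume "x \<in> K"
      then show "x \<in> (\<Union>k\<in>K. ball k (r k))" using r[of x] by (intro UN_I[of x]) auto
    qed
    obtain I where "I \<subseteq> K" "finite I" "K \<subseteq> (\<Union>k\<in>I. ball k (r k))"
      by (rule compactE_image[OF K _ cov]) auto
    then show ?thesis by blast
  qed
  have "\<exists>I. finite I \<and> K \<subseteq> (\<Union>k\<in>I. ball k (\<rho> k))"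
    by (rule cover) (rule \<rho>)
  then obtain I where I: "finite I" "K \<subseteq> (\<Union>k\<in>I. ball k (\<rho> k))"
    by blast
  have "\<exists>Q. finite Q \<and> K \<subseteq> (\<Union>q\<in>Q. ball q (\<rho> i))" for i
    by (rule cover) (rule \<rho>)
  then have "\<exists>Q. \<forall>i. finite (Q i) \<and> K \<subseteq> (\<Union>q\<in>Q i. ball q (\<rho> i))"
    by (intro choice allI)
  then obtain Q where Q: "\<And>i. finite (Q i)" "\<And>i. K \<subseteq> (\<Union>q\<in>Q i. ball q (\<rho> i))"
    by blast
  have "{h\<in>carrier G. \<phi> h ` K \<inter> K \<noteq> {}}
      \<subseteq> (\<Union>i\<in>I. \<Union>q\<in>Q i. {h\<in>carrier G. \<exists>x\<in>ball i (\<rho> i). \<phi> h x \<in> ball q (\<rho> i)})"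
  proof
    fix h assume "h \<in> {h\<in>carrier G. \<phi> h ` K \<inter> K \<noteq> {}}"
    then obtain x where h: "h \<in> carrier G" "x \<in> K" "\<phi> h x \<in> K" by blast
    then obtain i where i: "i \<in> I" "x \<in> ball i (\<rho> i)" using I(2) by blast
    obtain q where "q \<in> Q i" "\<phi> h x \<in> ball q (\<rho> i)" using h(3) Q(2)[of i] by blast
    then show "h \<in> (\<Union>i\<in>I. \<Union>q\<in>Q i. {h\<in>carrier G. \<exists>x\<in>ball i (\<rho> i). \<phi> h x \<in> ball q (\<rho> i)})"
      using h(1) i by blast
  qed
  moreover have "finite (\<Union>i\<in>I. \<Union>q\<in>Q i. {h\<in>carrier G. \<exists>x\<in>ball i (\<rho> i). \<phi> h x \<in> ball q (\<rho> i)})"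
    using I(1) Q(1) fin by (intro finite_UN_I)
  ultimately show ?thesis by (rule finite_subset)
qed

lemma finite_small_displacement:
  fixes \<phi> :: "'g \<Rightarrow> 'a::metric_space \<Rightarrow> 'a"
  assumes "group G" "isometric_action G \<phi>" "properly_acting G \<phi>" "proper_space TYPE('a)"
    and K: "compact K"
  shows "finite {\<gamma>\<in>carrier G. \<exists>k\<in>K. dist k (\<phi> \<gamma> k) \<le> b}"
proof -
  obtain R where R: "\<And>k. k \<in> K \<Longrightarrow> dist x0 k \<le> R"
    using compact_imp_bounded[OF K] unfolding bounded_any_center[of K x0] by blast
  define K' where "K' = cball x0 (R + \<bar>b\<bar>)"
  have "compact K'" using assms(4) unfolding proper_space_def K'_def by blast
  then have "finite {h\<in>carrier G. \<phi> h ` K' \<inter> K' \<noteq> {}}"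
    by (rule properly_acting_finite_compact[OF assms(1-3)])
  moreover have "{\<gamma>\<in>carrier G. \<exists>k\<in>K. dist k (\<phi> \<gamma> k) \<le> b} \<subseteq> {h\<in>carrier G. \<phi> h ` K' \<inter> K' \<noteq> {}}"
  proof
    fix \<gamma> assume "\<gamma> \<in> {\<gamma>\<in>carrier G. \<exists>k\<in>K. dist k (\<phi> \<gamma> k) \<le> b}"
    then obtain k where \<gamma>: "\<gamma> \<in> carrier G" "k \<in> K" "dist k (\<phi> \<gamma> k) \<le> b" by blast
    then have "dist x0 (\<phi> \<gamma> k) \<le> R + \<bar>b\<bar>" "dist x0 k \<le> R + \<bar>b\<bar>"
      using dist_triangle[of x0 "\<phi> \<gamma> k" k] R[of k] by linarith+
    then have "\<phi> \<gamma> k \<in> \<phi> \<gamma> ` K'" "\<phi> \<gamma> k \<in> K'" by (simp_all add: K'_def)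
    then show "\<gamma> \<in> {h\<in>carrier G. \<phi> h ` K' \<inter> K' \<noteq> {}}" using \<gamma>(1) by blast
  qed
  ultimately show ?thesis by (rule finite_subset[rotated])
qed

lemma Min_set_nonempty:
  fixes \<phi> :: "'g \<Rightarrow> 'a::metric_space \<Rightarrow> 'a"
  assumes grp: "group G" and ga: "geometric_action G \<phi>" and pr: "proper_space TYPE('a)"
    and g: "g \<in> carrier G"
  shows "Min_set (\<phi> g) \<noteq> {}"
proof -
  interpret G: group G by fact
  have iso: "isometric_action G \<phi>" and pa: "properly_acting G \<phi>" and "cocompact_action G \<phi>"
    using ga unfolding geometric_action_def by auto
  then obtain K where K: "compact K" and cov: "\<And>x. \<exists>h\<in>carrier G. x \<in> \<phi> h ` K"
    unfolding cocompact_action_def by blast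
  define a where "a = transl_length (\<phi> g)"
  define C where "C = {\<gamma>\<in>carrier G. \<exists>k\<in>K. dist k (\<phi> \<gamma> k) \<le> a + 1}
    \<inter> {inv\<^bsub>G\<^esub> h \<otimes>\<^bsub>G\<^esub> g \<otimes>\<^bsub>G\<^esub> h | h. h \<in> carrier G}"
  have "finite C"
    unfolding C_def using finite_small_displacement[OF grp iso pa pr K] by (rule finite_Int[OF disjI1])
  \<comment> \<open>\<open>|g|\<close> is the infimum of \<open>V\<close>, a finite union of compact sets, hence attained\<close>
  define V where "V = (\<Union>\<gamma>\<in>C. (\<lambda>k. dist k (\<phi> \<gamma> k)) ` K)"
  have "compact V"
    unfolding V_def
  proof (intro compact_UN \<open>finite C\<close> compact_continuous_image K)
    fix \<gamma> assume "\<gamma> \<in> C"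
    then have "continuous_on K (\<phi> \<gamma>)"
      by (intro isometry_continuous_on isometric_action_isometry[OF iso]) (auto simp: C_def)
    then show "continuous_on K (\<lambda>k. dist k (\<phi> \<gamma> k))"
      by (intro continuous_on_dist continuous_on_id)
  qed
  have V_ge: "a \<le> v" if "v \<in> V" for v
    using that transl_length_le[of "\<phi> g"] isometric_action_conj_displacement[OF grp iso g]
    unfolding V_def C_def a_def by auto
  have "a \<in> closure V"
    unfolding closure_approachable
  proof (intro allI impI)
    fix e :: real assume "0 < e"
    then have "\<exists>x. dist x (\<phi> g x) < a + min e 1"
      unfolding a_def transl_length_less_iff[symmetric] by simp
    then obtain x where x: "dist x (\<phi> g x) < a + min e 1" by blast
    obtain h k where hk: "h \<in> carrier G" "k \<in> K" "x = \<phi> h k" using cov[of x] by blast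
    define \<gamma> where "\<gamma> = inv\<^bsub>G\<^esub> h \<otimes>\<^bsub>G\<^esub> g \<otimes>\<^bsub>G\<^esub> h"
    have "dist k (\<phi> \<gamma> k) = dist x (\<phi> g x)"
      unfolding \<gamma>_def hk(3) by (rule isometric_action_conj_displacement[OF grp iso g hk(1)])
    then have small: "dist k (\<phi> \<gamma> k) < a + e" "dist k (\<phi> \<gamma> k) \<le> a + 1"
      using x by linarith+
    then have "\<gamma> \<in> C"
      using hk g unfolding C_def \<gamma>_def by blast
    then have "dist k (\<phi> \<gamma> k) \<in> V" using hk(2) unfolding V_def by blast
    moreover from this have "dist (dist k (\<phi> \<gamma> k)) a < e"
      using V_ge small(1) by (simp add: dist_real_def)
    ultimately show "\<exists>v\<in>V. dist v a < e" by blast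
  qed
  then have "a \<in> V" using compact_imp_closed[OF \<open>compact V\<close>] by (simp add: closure_closed)
  then obtain h k where "h \<in> carrier G" "k \<in> K"
    "a = dist k (\<phi> (inv\<^bsub>G\<^esub> h \<otimes>\<^bsub>G\<^esub> g \<otimes>\<^bsub>G\<^esub> h) k)"
    unfolding V_def C_def by blast
  then have "\<phi> h k \<in> Min_set (\<phi> g)"
    unfolding Min_set_def a_def by (simp add: isometric_action_conj_displacement[OF grp iso g])
  then show ?thesis by blast
qed

lemma Min_set_near_centralizer_orbit:
  fixes \<phi> :: "'g \<Rightarrow> 'a::metric_space \<Rightarrow> 'a"
  assumes grp: "group G" and ga: "geometric_action G \<phi>" and pr: "proper_space TYPE('a)"
    and g: "g \<in> carrier G"
  obtains D where "\<And>x. x \<in> Min_set (\<phi> g) \<Longrightarrow> \<exists>z\<in>centralizer G g. dist x (\<phi> z x0) \<le> D"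
proof -
  interpret G: group G by fact
  have iso: "isometric_action G \<phi>" and pa: "properly_acting G \<phi>" and "cocompact_action G \<phi>"
    using ga unfolding geometric_action_def by auto
  then obtain K where K: "compact K" and cov: "\<And>x. \<exists>h\<in>carrier G. x \<in> \<phi> h ` K"
    unfolding cocompact_action_def by blast
  obtain R where R: "\<And>k. k \<in> K \<Longrightarrow> dist x0 k \<le> R"
    using compact_imp_bounded[OF K] unfolding bounded_any_center[of K x0] by blast
  define a where "a = transl_length (\<phi> g)"
  define C where "C = {\<gamma>\<in>carrier G. \<exists>k\<in>K. dist k (\<phi> \<gamma> k) \<le> a}
    \<inter> {inv\<^bsub>G\<^esub> h \<otimes>\<^bsub>G\<^esub> g \<otimes>\<^bsub>G\<^esub> h | h. h \<in> carrier G}"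
  have "finite C"
    unfolding C_def using finite_small_displacement[OF grp iso pa pr K] by (rule finite_Int[OF disjI1])
  have "\<forall>\<gamma>\<in>C. \<exists>h. h \<in> carrier G \<and> \<gamma> = inv\<^bsub>G\<^esub> h \<otimes>\<^bsub>G\<^esub> g \<otimes>\<^bsub>G\<^esub> h"
    unfolding C_def by blast
  then have "\<exists>hs. \<forall>\<gamma>\<in>C. hs \<gamma> \<in> carrier G \<and> \<gamma> = inv\<^bsub>G\<^esub> (hs \<gamma>) \<otimes>\<^bsub>G\<^esub> g \<otimes>\<^bsub>G\<^esub> hs \<gamma>"
    by (rule bchoice)
  then obtain hs where hs: "\<And>\<gamma>. \<gamma> \<in> C \<Longrightarrow> hs \<gamma> \<in> carrier G \<and> \<gamma> = inv\<^bsub>G\<^esub> (hs \<gamma>) \<otimes>\<^bsub>G\<^esub> g \<otimes>\<^bsub>G\<^esub> hs \<gamma>"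
    by blast
  \<comment> \<open>a point of \<open>Min(g)\<close> lies in a translate \<open>h K\<close> with \<open>h\<^sup>-\<^sup>1 g h \<in> C\<close>; replacing \<open>h\<close> by the
    representative \<open>hs (h\<^sup>-\<^sup>1 g h)\<close> changes it by an element of the centralizer\<close>
  have "\<exists>z\<in>centralizer G g. dist x (\<phi> z x0) \<le> R + (\<Sum>\<gamma>\<in>C. dist (\<phi> (hs \<gamma>) x0) x0)"
    if x: "x \<in> Min_set (\<phi> g)" for x
  proof -
    obtain h k where hk: "h \<in> carrier G" "k \<in> K" "x = \<phi> h k" using cov[of x] by blast
    define \<gamma> where "\<gamma> = inv\<^bsub>G\<^esub> h \<otimes>\<^bsub>G\<^esub> g \<otimes>\<^bsub>G\<^esub> h"
    have "dist k (\<phi> \<gamma> k) = a"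
      using x isometric_action_conj_displacement[OF grp iso g hk(1)]
      unfolding Min_set_def \<gamma>_def a_def hk(3) by simp
    then have "\<gamma> \<in> C" using hk g unfolding C_def \<gamma>_def by blast
    define h' where "h' = hs \<gamma>"
    have h': "h' \<in> carrier G" "\<gamma> = inv\<^bsub>G\<^esub> h' \<otimes>\<^bsub>G\<^esub> g \<otimes>\<^bsub>G\<^esub> h'"
      using hs[OF \<open>\<gamma> \<in> C\<close>] by (auto simp: h'_def)
    define z where "z = h \<otimes>\<^bsub>G\<^esub> inv\<^bsub>G\<^esub> h'"
    have z: "z \<in> centralizer G g" "z \<in> carrier G"
      using conjugate_eq_imp_centralizer[OF grp g hk(1) h'(1)] h' hk(1)
      unfolding z_def \<gamma>_def by auto
    have "\<phi> z (\<phi> h' k) = x"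
      using isometric_action_mult[OF iso hk(1) G.inv_closed[OF h'(1)]]
        isometric_action_inv(1)[OF grp iso h'(1)] hk(3)
      unfolding z_def by simp
    moreover have "dist (\<phi> z (\<phi> h' k)) (\<phi> z x0) = dist (\<phi> h' k) x0"
      using isometric_action_isometry[OF iso z(2)] by blast
    ultimately have "dist x (\<phi> z x0) = dist (\<phi> h' k) x0" by simp
    also have "\<dots> \<le> dist (\<phi> h' k) (\<phi> h' x0) + dist (\<phi> h' x0) x0"
      by (rule dist_triangle)
    also have "\<dots> \<le> R + (\<Sum>\<gamma>\<in>C. dist (\<phi> (hs \<gamma>) x0) x0)"
    proof (rule add_mono)
      show "dist (\<phi> h' k) (\<phi> h' x0) \<le> R"
        using isometric_action_isometry[OF iso h'(1)] R[OF hk(2)] by (simp add: dist_commute)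
      show "dist (\<phi> h' x0) x0 \<le> (\<Sum>\<gamma>\<in>C. dist (\<phi> (hs \<gamma>) x0) x0)"
        unfolding h'_def by (rule member_le_sum[OF \<open>\<gamma> \<in> C\<close> _ \<open>finite C\<close>]) simp
    qed
    finally show ?thesis using z(1) by blast
  qed
  then show ?thesis using that by blast
qed

theorem corollary3:
  fixes G :: "('g, 'm) monoid_scheme"
    and \<phi> :: "'g \<Rightarrow> 'a::metric_space \<Rightarrow> 'a"
    and g :: 'g
    and p x0 :: 'a
  assumes "group G"
    and "CAT0 TYPE('a)"
    and "proper_space TYPE('a)"
    and "geometric_action G \<phi>"
    and "g \<in> carrier G"
    and "\<forall>n::nat. n > 0 \<longrightarrow> g [^]\<^bsub>G\<^esub> n \<noteq> \<one>\<^bsub>G\<^esub>"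
  shows "fixed_bdry \<phi> g = limit_set p \<phi> x0 (centralizer G g)
       \<and> limit_set p \<phi> x0 (centralizer G g) = bdry_of (Min_set (\<phi> g))"
proof -
  have iso: "isometric_action G \<phi>" using assms(4) unfolding geometric_action_def by simp
  have f: "\<forall>x y. dist (\<phi> g x) (\<phi> g y) = dist x y"
    using isometric_action_isometry[OF iso assms(5)] .
  obtain x where x: "x \<in> Min_set (\<phi> g)"
    using Min_set_nonempty[OF assms(1,4,3,5)] by blast
  obtain D where D: "\<And>x. x \<in> Min_set (\<phi> g) \<Longrightarrow> \<exists>z\<in>centralizer G g. dist x (\<phi> z x0) \<le> D"
    using Min_set_near_centralizer_orbit[OF assms(1,4,3,5)] by blast
  have "fixed_bdry \<phi> g \<subseteq> bdry_of (Min_set (\<phi> g))"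
  proof
    fix \<xi> assume "\<xi> \<in> fixed_bdry \<phi> g"
    then show "\<xi> \<in> bdry_of (Min_set (\<phi> g))"
      unfolding fixed_bdry_def by (auto intro: CAT0_fixed_bdry_subset_bdry_Min_set[OF assms(2) f x])
  qed
  moreover have "bdry_of (Min_set (\<phi> g)) \<subseteq> limit_set p \<phi> x0 (centralizer G g)"
  proof
    fix \<xi> assume \<xi>: "\<xi> \<in> bdry_of (Min_set (\<phi> g))"
    have "\<exists>y\<in>(\<lambda>z. \<phi> z x0) ` centralizer G g. dist x y \<le> D" if "x \<in> Min_set (\<phi> g)" for x
      using D[OF that] by blast
    then have "in_cone_closure p ((\<lambda>z. \<phi> z x0) ` centralizer G g) \<xi>"
      by (rule CAT0_bdry_of_in_cone_closure[OF assms(2) _ \<xi>])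
    then show "\<xi> \<in> limit_set p \<phi> x0 (centralizer G g)"
      using \<xi> unfolding limit_set_def bdry_of_def by simp
  qed
  moreover have "limit_set p \<phi> x0 (centralizer G g) \<subseteq> fixed_bdry \<phi> g"
  proof
    fix \<xi> assume "\<xi> \<in> limit_set p \<phi> x0 (centralizer G g)"
    then have \<xi>: "\<xi> \<in> visual_boundary TYPE('a)"
      "in_cone_closure p ((\<lambda>z. \<phi> z x0) ` centralizer G g) \<xi>"
      unfolding limit_set_def by simp_all
    have "dist y (\<phi> g y) \<le> dist x0 (\<phi> g x0)" if "y \<in> (\<lambda>z. \<phi> z x0) ` centralizer G g" for y
      using that centralizer_displacement[OF iso assms(5)] by auto
    then have "bdry_act (\<phi> g) \<xi> = \<xi>"
      by (rule CAT0_cone_closure_fixed[OF assms(2) f _ \<xi>])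
    then show "\<xi> \<in> fixed_bdry \<phi> g" unfolding fixed_bdry_def using \<xi>(1) by simp
  qed
  ultimately show ?thesis by blast
qed

end
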